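(* Let $\mathbf{u}\approx\mathbf{v}$ be any identity satisfied by the sylvester monoid $\mathrm{sylv}_2$. Then: (i) $\mathrm{occ}(x,\mathbf{u})=\mathrm{occ}(x,\mathbf{v})$ for every letter $x\in\mathcal{X}$; (ii) $\overrightarrow{\mathrm{occ}}_y(x,\mathbf{u})=\overrightarrow{\mathrm{occ}}_y(x,\mathbf{v})$ for all letters $x,y\in\mathcal{X}$; (iii) $\mathrm{fp}(\mathbf{u})=\mathrm{fp}(\mathbf{v})$.
   Context: A right strict binary search tree is a labelled rooted binary tree (labels from $\{1<2<\cdots\}$) in which each node's label is $\ge$ every label in its left subtree and $<$ every label in its right subtree. Inserting $a$ into such a tree $T$: if $T$ is empty, create a node labelled $a$; otherwise, with root label $x$, recursively insert $a$ into the right subtree if $a>x$ and into the left subtree otherwise. For $w=w_1\cdots w_k$ over $\{1,2\}$, $\mathrm{P}(w)$ is obtained from the empty tree by inserting $w_k,w_{k-1},\dots,w_1$ in this order. The sylvester monoid of rank $2$, $\mathrm{sylv}_2$, is the quotient of the free monoid $\{1,2\}^*$ by the congruence $u\equiv v\iff \mathrm{P}(u)=\mathrm{P}(v)$. $\mathcal{X}$ is a countably infinite alphabet; an identity $\mathbf{u}\approx\mathbf{v}$ ($\mathbf{u},\mathbf{v}\in\mathcal{X}^*$) is satisfied by a monoid $S$ if $\varphi(\mathbf{u})=\varphi(\mathbf{v})$ for all maps $\varphi:\mathcal{X}\to S$ extended to monoid homomorphisms. For a word $\mathbf{w}$ and letters $x,y$: $\mathrm{occ}(x,\mathbf{w})$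 is the number of occurrences of $x$ in $\mathbf{w}$; $\overrightarrow{\mathrm{occ}}_y(x,\mathbf{w})$ is the number of occurrences of $x$ after the last occurrence of $y$ in $\mathbf{w}$; $\mathrm{fp}(\mathbf{w})$ is the word obtained from $\mathbf{w}$ by retaining only the last occurrence of each letter. *)

theory Defs
  imports Main
begin

(* Labelled binary trees; labels are natural numbers (the alphabet {1 < 2 < ...}). *)
datatype tree = Leaf | Node tree nat tree

fun ins :: "nat \<Rightarrow> tree \<Rightarrow> tree" where
  "ins a Leaf = Node Leaf a Leaf"
| "ins a (Node l x r) = (if a > x then Node l x (ins a r) else Node (ins a l) x r)"

definition P :: "nat list \<Rightarrow> tree" where
  "P w = foldr ins w Leaf"

definition sylv_equiv :: "nat list \<Rightarrow> nat list \<Rightarrow> bool" where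
  "sylv_equiv u v \<longleftrightarrow> P u = P v"

(* Words over the countably infinite alphabet X (modelled as nat);
   a map X -> sylv_2 extended to a homomorphism is represented by choosing for
   each letter a representative word over {1,2}; the image of a word is the class
   of the concatenation of representatives. *)
definition subst :: "(nat \<Rightarrow> nat list) \<Rightarrow> nat list \<Rightarrow> nat list" where
  "subst \<sigma> w = concat (map \<sigma> w)"

definition sylv2_satisfies :: "nat list \<Rightarrow> nat list \<Rightarrow> bool" where
  "sylv2_satisfies u v \<longleftrightarrow>
     (\<forall>\<sigma>. (\<forall>x. set (\<sigma> x) \<subseteq> {1, 2}) \<longrightarrow> sylv_equiv (subst \<sigma> u) (subst \<sigma> v))"

definition occ :: "nat \<Rightarrow> nat list \<Rightarrow> nat" where
  "occ x w = count_list w x"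

(* number of occurrences of x after the last occurrence of y in w
   (if y does not occur in w, all occurrences of x are counted) *)
definition occ_after :: "nat \<Rightarrow> nat \<Rightarrow> nat list \<Rightarrow> nat" where
  "occ_after y x w = count_list (rev (takeWhile (\<lambda>c. c \<noteq> y) (rev w))) x"

fun fp :: "nat list \<Rightarrow> nat list" where
  "fp [] = []"
| "fp (a # w) = (if a \<in> set w then fp w else a # fp w)"

end

theory Submission
  imports Defs
begin

(* Evaluating an identity under the substitution x \<mapsto> 1 (all other letters erased) and
   comparing the sizes of the trees gives (i).  Under x \<mapsto> 2, y \<mapsto> 1, others erased,
   the word after the last y becomes the maximal suffix of 2s, and the left spine of P(w)
   for a word w over {1,2} is 2^k 1^m with k the length of that suffix; this gives (ii).
   Finally fp = remdups, and remdups w is determined by the data in (i) and (ii): its last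
   letter is the unique y after which nothing occurs, and deleting that letter everywhere
   preserves the data, so induction applies. *)

fun left_spine :: "tree \<Rightarrow> nat list" where
  "left_spine Leaf = []"
| "left_spine (Node l x r) = x # left_spine l"

lemma left_spine_ins:
  "left_spine (ins a t) =
     (if \<forall>x\<in>set (left_spine t). a \<le> x then left_spine t @ [a] else left_spine t)"
  by (induction t) auto

lemma P_Cons: "P (a # w) = ins a (P w)"
  by (simp add: P_def)

lemma size_ins: "size (ins a t) = Suc (size t)"
  by (induction t) auto

lemma size_P: "size (P w) = length w"
  by (induction w) (simp_all add: P_def size_ins)

lemma left_spine_P_binary:
  assumes "set w \<subseteq> {1, 2}"
  shows "left_spine (P w) =
    replicate (length (takeWhile (\<lambda>c. c = 2) (rev w))) 2 @ replicate (count_list w 1) 1"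
  using assms
proof (induction w)
  case Nil
  then show ?case by (simp add: P_def)
next
  case (Cons a w)
  have all_two_iff: "(\<forall>c\<in>set w. c = 2) \<longleftrightarrow> count_list w 1 = 0"
    using Cons.prems by (auto simp: count_list_0_iff)
  show ?case
  proof (cases "count_list w 1 = 0")
    case True
    then have twos: "takeWhile (\<lambda>c. c = 2) (rev w) = rev w"
      using all_two_iff by simp
    have IH: "left_spine (P w) = replicate (length w) 2"
      using Cons True twos by simp
    show ?thesis
      using Cons.prems True all_two_iff
      by (auto simp: P_Cons left_spine_ins IH takeWhile_append replicate_append_same)
  next
    case False
    then show ?thesis
      using Cons all_two_iff
      by (auto simp: P_Cons left_spine_ins takeWhile_append replicate_append_same)
  qed
qed

lemma count_two_left_spine_P:
  assumes "set w \<subseteq> {1, 2}"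
  shows "count_list (left_spine (P w)) 2 = length (takeWhile (\<lambda>c. c = 2) (rev w))"
proof -
  have "count_list (replicate n (2::nat)) 2 = n" for n
    by (induction n) auto
  then show ?thesis by (simp add: left_spine_P_binary[OF assms])
qed

lemma occ_after_self: "occ_after y y w = 0"
  by (auto simp: occ_after_def count_list_0_iff dest: set_takeWhileD)

lemma occ_after_notin: "x \<notin> set w \<Longrightarrow> occ_after y x w = 0"
  by (auto simp: occ_after_def count_list_0_iff dest: set_takeWhileD)

lemma occ_after_notin_separator:
  assumes "y \<notin> set w"
  shows "occ_after y x w = occ x w"
proof -
  have "takeWhile (\<lambda>c. c \<noteq> y) (rev w) = rev w"
    using assms by auto
  then show ?thesis by (simp only: occ_after_def occ_def count_list_rev)
qed

lemma occ_removeAll: "occ x (removeAll a w) = (if x = a then 0 else occ x w)"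
  by (induction w) (auto simp: occ_def)

lemma occ_after_removeAll:
  "x \<noteq> a \<Longrightarrow> y \<noteq> a \<Longrightarrow> occ_after y x (removeAll a w) = occ_after y x w"
  by (induction w rule: rev_induct) (auto simp: occ_after_def)

lemma all_occ_after_zero_iff_last:
  "w \<noteq> [] \<Longrightarrow> (\<forall>x. occ_after y x w = 0) \<longleftrightarrow> y = last w"
  by (induction w rule: rev_induct) (auto simp: occ_after_def)

lemma remdups_last:
  assumes "w \<noteq> []"
  shows "remdups w = remdups (removeAll (last w) w) @ [last w]"
proof -
  have "remdups (u @ [a]) = remdups (removeAll a (u @ [a])) @ [a]" for u and a :: 'a
    by (induction u) auto
  from this[of "butlast w" "last w"] show ?thesis
    unfolding append_butlast_last_id[OF assms] .
qed

lemma remdups_eq_if_same_occ_and_occ_after: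
  assumes "\<forall>x. occ x u = occ x v" and "\<forall>x y. occ_after y x u = occ_after y x v"
  shows "remdups u = remdups v"
  using assms
proof (induction "length u" arbitrary: u v rule: less_induct)
  case less
  show ?case
  proof (cases "u = []")
    case True
    then show ?thesis
      using less.prems(1) by (auto simp: occ_def count_list_0_iff)
  next
    case False
    define a where "a = last u"
    have "a \<in> set u"
      using False by (simp add: a_def)
    then have "occ a u \<noteq> 0"
      by (simp add: occ_def count_list_0_iff)
    then have "occ a v \<noteq> 0"
      using less.prems(1) by simp
    then have "v \<noteq> []" by (auto simp: occ_def)
    have "\<forall>x. occ_after a x v = 0"
      using less.prems(2) all_occ_after_zero_iff_last[OF False] by (simp add: a_def)
    then have last_v: "last v = a"
      using all_occ_after_zero_iff_last[OF \<open>v \<noteq> []\<close>] by simp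
    let ?u = "removeAll a u" and ?v = "removeAll a v"
    have occ_eq: "\<forall>x. occ x ?u = occ x ?v"
      using less.prems(1) by (simp add: occ_removeAll)
    have occ_after_eq: "\<forall>x y. occ_after y x ?u = occ_after y x ?v"
    proof (intro allI)
      fix x y
      consider "x = a" | "y = a" | "x \<noteq> a" "y \<noteq> a" by blast
      then show "occ_after y x ?u = occ_after y x ?v"
      proof cases
        case 1
        then show ?thesis by (simp add: occ_after_notin)
      next
        case 2
        then show ?thesis using occ_eq by (simp add: occ_after_notin_separator)
      next
        case 3
        then show ?thesis using less.prems(2) by (simp add: occ_after_removeAll)
      qed
    qed
    have "length ?u < length u"
      using \<open>a \<in> set u\<close> by (rule length_removeAll_less)
    then have "remdups ?u = remdups ?v"
      using occ_eq occ_after_eq by (rule less.hyps)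
    moreover have "remdups u = remdups ?u @ [a]"
      using remdups_last[OF False] by (simp add: a_def)
    moreover have "remdups v = remdups ?v @ [a]"
      using remdups_last[OF \<open>v \<noteq> []\<close>] by (simp add: last_v)
    ultimately show ?thesis by simp
  qed
qed

lemma fp_eq_remdups: "fp w = remdups w"
  by (induction w) auto

lemma sylv2_satisfiesD:
  "sylv2_satisfies u v \<Longrightarrow> (\<And>c. set (\<sigma> c) \<subseteq> {1, 2}) \<Longrightarrow> P (subst \<sigma> u) = P (subst \<sigma> v)"
  by (simp add: sylv2_satisfies_def sylv_equiv_def)

lemma length_subst_single: "length (subst (\<lambda>c. if c = x then [a] else []) w) = occ x w"
  by (induction w) (auto simp: subst_def occ_def)

definition pair_subst :: "nat \<Rightarrow> nat \<Rightarrow> nat \<Rightarrow> nat list" where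
  "pair_subst x y c = (if c = x then [2] else if c = y then [1] else [])"

lemma occ_after_eq_trailing_twos:
  assumes "x \<noteq> y"
  shows "occ_after y x w = length (takeWhile (\<lambda>c. c = 2) (rev (subst (pair_subst x y) w)))"
proof -
  have "rev (subst (pair_subst x y) w) = subst (pair_subst x y) (rev w)"
    by (induction w) (simp_all add: subst_def pair_subst_def)
  moreover have "length (takeWhile (\<lambda>c. c = 2) (subst (pair_subst x y) L)) =
      count_list (takeWhile (\<lambda>c. c \<noteq> y) L) x" for L
    using assms by (induction L) (auto simp: subst_def pair_subst_def)
  ultimately show ?thesis
    by (simp add: occ_after_def)
qed

lemma sylv2_satisfies_occ:
  assumes "sylv2_satisfies u v"
  shows "occ x u = occ x v"
proof -
  let ?\<sigma> = "\<lambda>c. if c = x then [1::nat] else []"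
  have "set (?\<sigma> c) \<subseteq> {1, 2}" for c
    by (cases "c = x") simp_all
  then have "P (subst ?\<sigma> u) = P (subst ?\<sigma> v)"
    by (rule sylv2_satisfiesD[OF assms])
  then have "size (P (subst ?\<sigma> u)) = size (P (subst ?\<sigma> v))"
    by (rule arg_cong)
  then show ?thesis
    by (simp only: size_P length_subst_single)
qed

lemma sylv2_satisfies_occ_after:
  assumes "sylv2_satisfies u v"
  shows "occ_after y x u = occ_after y x v"
proof (cases "x = y")
  case True
  then show ?thesis by (simp add: occ_after_self)
next
  case False
  have binary: "set (subst (pair_subst x y) w) \<subseteq> {1, 2}" for w
    by (auto simp: subst_def pair_subst_def)
  have "P (subst (pair_subst x y) u) = P (subst (pair_subst x y) v)"
    using assms by (rule sylv2_satisfiesD) (auto simp: pair_subst_def)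
  then have "count_list (left_spine (P (subst (pair_subst x y) u))) 2 =
      count_list (left_spine (P (subst (pair_subst x y) v))) 2"
    by simp
  then show ?thesis
    by (simp only: count_two_left_spine_P[OF binary] occ_after_eq_trailing_twos[OF False])
qed

theorem lemma4p3:
  fixes u v :: "nat list"
  assumes "sylv2_satisfies u v"
  shows "(\<forall>x. occ x u = occ x v)
       \<and> (\<forall>x y. occ_after y x u = occ_after y x v)
       \<and> fp u = fp v"
  using sylv2_satisfies_occ[OF assms] sylv2_satisfies_occ_after[OF assms]
  by (simp add: fp_eq_remdups remdups_eq_if_same_occ_and_occ_after)

end
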